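(* Let $n\ge 3$. In the Game of Cycles on the $C_n$ board (a cycle graph with $n$ vertices and $n$ edges embedded in the plane, with its single bounded cell), the outcome is determined by the parity of $n$ regardless of how the players play: if $n$ is odd, Player~1 wins, and if $n$ is even, Player~2 wins.
   Context: The Game of Cycles. A board is a simple connected planar graph embedded in the plane, together with its bounded cells. Two players alternate turns; on a turn a player marks one unmarked edge with an arrow pointing along the edge in one of its two directions. Each edge receives at most one arrow, and arrows have the same effect regardless of who placed them. Moves must obey the sink-source rule: no move may create a sink (a vertex all of whose incident edges are marked with arrows pointing toward it) or a source (a vertex all of whose incident edges are marked with arrows pointing away from it). A player who has a legal move must make one. A cycle cell is a bounded cell all of whose boundary edges are marked with arrows all cycling in the same direction around that cell. The first player to create a cycle cell wins; if play ends (no legal move remains) without a cycle cell, the player who made the last move wins. *)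

theory Defs
  imports Main
begin

(* The unique bounded cell has all n edges on its boundary.
   A position records, for each edge, either None (unmarked) or Some h, meaning the
   arrow on that edge points towards its endpoint h (h is the head). *)

type_synonym position = "nat \<Rightarrow> nat option"
type_synonym move = "nat \<times> nat"   (* (edge, head vertex) *)

definition ends :: "nat \<Rightarrow> nat \<Rightarrow> nat set" where
  "ends n e = {e, Suc e mod n}"

definition incident :: "nat \<Rightarrow> nat \<Rightarrow> nat set" where
  "incident n v = {e. e < n \<and> v \<in> ends n e}"

definition is_sink :: "nat \<Rightarrow> position \<Rightarrow> nat \<Rightarrow> bool" where
  "is_sink n p v = (\<forall>e\<in>incident n v. p e = Some v)"

definition is_source :: "nat \<Rightarrow> position \<Rightarrow> nat \<Rightarrow> bool" where
  "is_source n p v = (\<forall>e\<in>incident n v. \<exists>h. p e = Some h \<and> h \<noteq> v)"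

definition cycle_cell :: "nat \<Rightarrow> position \<Rightarrow> bool" where
  "cycle_cell n p = ((\<forall>e<n. p e = Some (Suc e mod n)) \<or> (\<forall>e<n. p e = Some e))"

definition apply_move :: "position \<Rightarrow> move \<Rightarrow> position" where
  "apply_move p mv = p(fst mv := Some (snd mv))"

definition legal :: "nat \<Rightarrow> position \<Rightarrow> move \<Rightarrow> bool" where
  "legal n p mv = (fst mv < n \<and> p (fst mv) = None \<and> snd mv \<in> ends n (fst mv) \<and>
     (\<forall>v<n. \<not> is_sink n (apply_move p mv) v \<and> \<not> is_source n (apply_move p mv) v))"

definition empty_pos :: position where
  "empty_pos = (\<lambda>_. None)"

definition run :: "move list \<Rightarrow> position" where
  "run ms = foldl apply_move empty_pos ms"

definition valid_play :: "nat \<Rightarrow> move list \<Rightarrow> bool" where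
  "valid_play n ms = (\<forall>i<length ms.
      \<not> cycle_cell n (run (take i ms)) \<and> legal n (run (take i ms)) (ms ! i))"

definition complete_play :: "nat \<Rightarrow> move list \<Rightarrow> bool" where
  "complete_play n ms = (valid_play n ms \<and>
      (cycle_cell n (run ms) \<or> \<not> (\<exists>mv. legal n (run ms) mv)))"

definition mover :: "nat \<Rightarrow> nat" where
  "mover i = (if even i then 1 else 2)"

(* winner of a finished nonempty game: the creator of the cycle cell if the last move
   created one, otherwise the player who made the last move; in both cases this is
   the maker of the last move *)
definition winner :: "nat \<Rightarrow> move list \<Rightarrow> nat" where
  "winner n ms = (if cycle_cell n (run ms) then mover (length ms - 1)
                  else mover (length ms - 1))"

end

theory Submission
  imports Defs
begin

text \<open>Every move marks one edge, so after a game of length k exactly n - k edges are unmarked,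
  and the last move was made by Player 1 iff k is odd. It therefore suffices that every finished
  game leaves an even number of unmarked edges. If a cycle cell was created there are none.
  Otherwise no legal move remains, and the sink-source rule forces two adjacent marked edges to
  point the same way around the cycle, while an unmarked edge must lie between two marked edges
  pointing opposite ways. Give each marked edge the sign of its direction and each unmarked edge
  the sign of its predecessor: the sign changes between consecutive edges are then exactly at the
  unmarked edges, and around a cycle the number of sign changes is even.\<close>

definition cyc_next :: "nat \<Rightarrow> nat \<Rightarrow> nat" where
  "cyc_next n e = Suc e mod n"

definition cyc_prev :: "nat \<Rightarrow> nat \<Rightarrow> nat" where
  "cyc_prev n v = (if v = 0 then n - 1 else v - 1)"

lemma cyc_next_eq: "e < n \<Longrightarrow> cyc_next n e = (if Suc e = n then 0 else Suc e)"
  by (auto simp: cyc_next_def)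

lemma cyc_next_less: "e < n \<Longrightarrow> cyc_next n e < n"
  by (simp add: cyc_next_eq)

lemma cyc_prev_less: "v < n \<Longrightarrow> cyc_prev n v < n"
  by (auto simp: cyc_prev_def)

lemma cyc_next_prev [simp]: "v < n \<Longrightarrow> cyc_next n (cyc_prev n v) = v"
  by (auto simp: cyc_prev_def cyc_next_eq)

lemma cyc_prev_next [simp]: "e < n \<Longrightarrow> cyc_prev n (cyc_next n e) = e"
  by (auto simp: cyc_prev_def cyc_next_eq)

lemma cyc_next_neq: "2 \<le> n \<Longrightarrow> e < n \<Longrightarrow> cyc_next n e \<noteq> e"
  by (auto simp: cyc_next_eq)

lemma cyc_prev_neq: "2 \<le> n \<Longrightarrow> v < n \<Longrightarrow> cyc_prev n v \<noteq> v"
  by (auto simp: cyc_prev_def)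

lemma bij_betw_cyc_next: "bij_betw (cyc_next n) {..<n} {..<n}"
proof -
  have inj: "inj_on (cyc_next n) {..<n}"
    by (metis cyc_prev_next inj_onI lessThan_iff)
  moreover have "cyc_next n ` {..<n} \<subseteq> {..<n}"
    using cyc_next_less by auto
  ultimately show ?thesis
    by (simp add: bij_betw_def endo_inj_surj)
qed

lemma even_card_sign_changes:
  fixes s :: "nat \<Rightarrow> int"
  assumes signs: "\<And>e. e < n \<Longrightarrow> s e = 1 \<or> s e = -1"
  shows "even (card {e. e < n \<and> s e * s (cyc_next n e) = -1})"
proof -
  let ?C = "{e. e < n \<and> s e * s (cyc_next n e) = -1}"
  have "(\<Prod>e<n. s e * s (cyc_next n e)) = (\<Prod>e<n. s e) * (\<Prod>e<n. s (cyc_next n e))"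
    by (rule prod.distrib)
  also have "(\<Prod>e<n. s (cyc_next n e)) = (\<Prod>e<n. s e)"
    using prod.reindex_bij_betw[OF bij_betw_cyc_next] by blast
  also have "(\<Prod>e<n. s e) * (\<Prod>e<n. s e) = (\<Prod>e<n. s e * s e)"
    by (rule prod.distrib[symmetric])
  also have "\<dots> = 1"
    using signs by (intro prod.neutral) fastforce
  finally have prod_one: "(\<Prod>e<n. s e * s (cyc_next n e)) = 1" .
  have "s e * s (cyc_next n e) = 1 \<or> s e * s (cyc_next n e) = -1" if "e < n" for e
    using signs[OF that] signs[OF cyc_next_less[OF that]] by auto
  then have "(\<Prod>e<n. s e * s (cyc_next n e)) = (\<Prod>e<n. if e \<in> ?C then -1 else 1)"
    by (intro prod.cong) auto
  also have "\<dots> = (-1) ^ card ?C"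
    by (simp add: prod.If_cases Int_def)
  finally show ?thesis
    using prod_one by (simp add: minus_one_power_iff split: if_splits)
qed

lemma incident_eq: "v < n \<Longrightarrow> incident n v = {v, cyc_prev n v}"
  unfolding incident_def ends_def
  using cyc_prev_less[of v n] by (auto simp: cyc_next_def[symmetric])

lemma is_sink_iff:
  "v < n \<Longrightarrow> is_sink n p v \<longleftrightarrow> p v = Some v \<and> p (cyc_prev n v) = Some v"
  by (simp add: is_sink_def incident_eq)

lemma is_source_iff: "v < n \<Longrightarrow> is_source n p v \<longleftrightarrow>
    (\<exists>h. p v = Some h \<and> h \<noteq> v) \<and> (\<exists>h. p (cyc_prev n v) = Some h \<and> h \<noteq> v)"
  by (simp add: is_source_def incident_eq)

definition arrows_on_board :: "nat \<Rightarrow> position \<Rightarrow> bool" where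
  "arrows_on_board n p \<longleftrightarrow> (\<forall>e h. p e = Some h \<longrightarrow> e < n \<and> (h = e \<or> h = cyc_next n e))"

definition sink_source_free :: "nat \<Rightarrow> position \<Rightarrow> bool" where
  "sink_source_free n p \<longleftrightarrow> (\<forall>v<n. \<not> is_sink n p v \<and> \<not> is_source n p v)"

lemma legal_iff: "legal n p (e, h) \<longleftrightarrow>
    e < n \<and> p e = None \<and> (h = e \<or> h = cyc_next n e) \<and> sink_source_free n (p(e := Some h))"
  unfolding legal_def ends_def cyc_next_def sink_source_free_def apply_move_def by simp

lemma run_snoc: "run (ms @ [m]) = apply_move (run ms) m"
  by (simp add: run_def)

lemma valid_play_snoc: "valid_play n (ms @ [m]) \<longleftrightarrow>
    valid_play n ms \<and> \<not> cycle_cell n (run ms) \<and> legal n (run ms) m"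
  by (auto simp: valid_play_def nth_append less_Suc_eq)

lemma valid_play_arrows_on_board: "valid_play n ms \<Longrightarrow> arrows_on_board n (run ms)"
proof (induction ms rule: rev_induct)
  case Nil
  then show ?case by (simp add: arrows_on_board_def run_def empty_pos_def)
next
  case (snoc m ms)
  obtain e h where m: "m = (e, h)" by fastforce
  with snoc show ?case
    by (auto simp: valid_play_snoc legal_iff run_snoc apply_move_def arrows_on_board_def)
qed

lemma valid_play_card_marked: "valid_play n ms \<Longrightarrow> card {e. run ms e \<noteq> None} = length ms"
proof (induction ms rule: rev_induct)
  case Nil
  then show ?case by (simp add: run_def empty_pos_def)
next
  case (snoc m ms)
  obtain e h where m: "m = (e, h)" by fastforce
  have valid: "valid_play n ms" and legal: "legal n (run ms) (e, h)"
    using snoc.prems m by (auto simp: valid_play_snoc)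
  have "{e. run ms e \<noteq> None} \<subseteq> {..<n}"
    using valid_play_arrows_on_board[OF valid] by (auto simp: arrows_on_board_def)
  then have "finite {e. run ms e \<noteq> None}"
    by (rule finite_subset) simp
  moreover have "{x. run (ms @ [m]) x \<noteq> None} = insert e {x. run ms x \<noteq> None}"
    by (auto simp: run_snoc apply_move_def m)
  ultimately show ?case
    using snoc.IH[OF valid] legal by (simp add: legal_iff)
qed

lemma valid_play_length_add_unmarked:
  assumes "valid_play n ms"
  shows "length ms + card {e. e < n \<and> run ms e = None} = n"
proof -
  let ?M = "{e. run ms e \<noteq> None}"
  have marked_sub: "?M \<subseteq> {..<n}"
    using valid_play_arrows_on_board[OF assms] by (auto simp: arrows_on_board_def)
  have "{e. e < n \<and> run ms e = None} = {..<n} - ?M"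
    by auto
  then have "card {e. e < n \<and> run ms e = None} = n - card ?M"
    using marked_sub by (simp add: card_Diff_subset finite_subset)
  moreover have "card ?M \<le> n"
    using card_mono[OF _ marked_sub] by simp
  ultimately show ?thesis
    using valid_play_card_marked[OF assms] by simp
qed

lemma sink_source_free_empty_pos: "sink_source_free n empty_pos"
  by (simp add: sink_source_free_def is_sink_iff is_source_iff empty_pos_def)

lemma valid_play_sink_source_free: "valid_play n ms \<Longrightarrow> sink_source_free n (run ms)"
proof (cases ms rule: rev_exhaust)
  case Nil
  then show ?thesis by (simp add: run_def sink_source_free_empty_pos)
next
  case (snoc ms' m)
  moreover assume "valid_play n ms"
  ultimately have "legal n (run ms') m"
    by (simp add: valid_play_snoc)
  then show ?thesis
    using snoc by (cases m) (simp add: legal_iff run_snoc apply_move_def)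
qed

lemma sink_source_free_update:
  assumes free: "sink_source_free n p" and e: "e < n"
    and at_e: "\<not> is_sink n (p(e := a)) e" "\<not> is_source n (p(e := a)) e"
    and at_next: "\<not> is_sink n (p(e := a)) (cyc_next n e)"
      "\<not> is_source n (p(e := a)) (cyc_next n e)"
  shows "sink_source_free n (p(e := a))"
  unfolding sink_source_free_def
proof (intro allI impI)
  fix v
  assume v: "v < n"
  show "\<not> is_sink n (p(e := a)) v \<and> \<not> is_source n (p(e := a)) v"
  proof (cases "v = e \<or> v = cyc_next n e")
    case True
    then show ?thesis using at_e at_next by blast
  next
    case False
    then have "cyc_prev n v \<noteq> e"
      using v by (metis cyc_next_prev)
    then show ?thesis
      using False free v by (simp add: sink_source_free_def is_sink_iff is_source_iff)
  qed
qed

lemma legal_forward: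
  assumes n: "2 \<le> n" and board: "arrows_on_board n p" and free: "sink_source_free n p"
    and e: "e < n" "p e = None"
    and next_ok: "p (cyc_next n e) \<noteq> Some (cyc_next n e)"
    and prev_ok: "p (cyc_prev n e) \<noteq> Some (cyc_prev n e)"
  shows "legal n p (e, cyc_next n e)"
proof -
  let ?v = "cyc_next n e"
  have v: "?v < n" "?v \<noteq> e" "cyc_prev n ?v = e"
    using e n by (auto simp: cyc_next_less cyc_next_neq)
  have "p (cyc_prev n e) \<noteq> Some h" if "h \<noteq> e" for h
    using board prev_ok that cyc_prev_less[OF e(1)] e(1) unfolding arrows_on_board_def
    by (metis cyc_next_prev)
  then have "sink_source_free n (p(e := Some ?v))"
    using v e n free next_ok
    by (intro sink_source_free_update) (auto simp: is_sink_iff is_source_iff cyc_prev_neq)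
  then show ?thesis
    using e by (simp add: legal_iff)
qed

lemma legal_backward:
  assumes n: "2 \<le> n" and board: "arrows_on_board n p" and free: "sink_source_free n p"
    and e: "e < n" "p e = None"
    and next_ok: "p (cyc_next n e) \<noteq> Some (cyc_next n (cyc_next n e))"
    and prev_ok: "p (cyc_prev n e) \<noteq> Some e"
  shows "legal n p (e, e)"
proof -
  let ?v = "cyc_next n e"
  have v: "?v < n" "?v \<noteq> e" "cyc_prev n ?v = e"
    using e n by (auto simp: cyc_next_less cyc_next_neq)
  have "p ?v \<noteq> Some h" if "h \<noteq> ?v" for h
    using board next_ok that v(1) unfolding arrows_on_board_def by metis
  then have "sink_source_free n (p(e := Some e))"
    using v e n free prev_ok
    by (intro sink_source_free_update) (auto simp: is_sink_iff is_source_iff cyc_prev_neq)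
  then show ?thesis
    using e by (simp add: legal_iff)
qed

definition clockwise :: "nat \<Rightarrow> position \<Rightarrow> nat \<Rightarrow> bool" where
  "clockwise n p e \<longleftrightarrow> p e = Some (cyc_next n e)"

lemma sink_source_free_adjacent_clockwise:
  assumes n: "2 \<le> n" and board: "arrows_on_board n p" and free: "sink_source_free n p"
    and e: "e < n" and marked: "p e \<noteq> None" "p (cyc_next n e) \<noteq> None"
  shows "clockwise n p (cyc_next n e) \<longleftrightarrow> clockwise n p e"
proof -
  let ?v = "cyc_next n e"
  have v: "?v < n" "?v \<noteq> e" "cyc_next n ?v \<noteq> ?v" "cyc_prev n ?v = e"
    using e n by (auto simp: cyc_next_less cyc_next_neq)
  have "p ?v = Some ?v \<or> p ?v = Some (cyc_next n ?v)" "p e = Some e \<or> p e = Some ?v"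
    using board marked v(1) unfolding arrows_on_board_def by blast+
  moreover have "\<not> is_sink n p ?v" "\<not> is_source n p ?v"
    using free v(1) by (auto simp: sink_source_free_def)
  ultimately show ?thesis
    using v by (auto simp: clockwise_def is_sink_iff is_source_iff)
qed

lemma no_legal_move_unmarked_between_opposite:
  assumes n: "2 \<le> n" and board: "arrows_on_board n p" and free: "sink_source_free n p"
    and dead: "\<nexists>mv. legal n p mv" and e: "e < n" "p e = None"
  shows "p (cyc_prev n e) \<noteq> None \<and> p (cyc_next n e) \<noteq> None
    \<and> (clockwise n p (cyc_prev n e) \<longleftrightarrow> \<not> clockwise n p (cyc_next n e))"
proof -
  have "cyc_next n (cyc_next n e) \<noteq> cyc_next n e" "cyc_prev n e \<noteq> e"
    using n e by (auto simp: cyc_next_less cyc_next_neq cyc_prev_neq)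
  moreover have "p (cyc_next n e) = Some (cyc_next n e) \<or> p (cyc_prev n e) = Some (cyc_prev n e)"
    using dead legal_forward[OF n board free e] by blast
  moreover have "p (cyc_next n e) = Some (cyc_next n (cyc_next n e)) \<or> p (cyc_prev n e) = Some e"
    using dead legal_backward[OF n board free e] by blast
  ultimately show ?thesis
    using e(1) by (auto simp: clockwise_def)
qed

definition edge_sign :: "nat \<Rightarrow> position \<Rightarrow> nat \<Rightarrow> int" where
  "edge_sign n p e = (if clockwise n p (if p e = None then cyc_prev n e else e) then 1 else -1)"

lemma edge_sign_change_iff_unmarked:
  assumes n: "2 \<le> n" and board: "arrows_on_board n p" and free: "sink_source_free n p"
    and dead: "\<nexists>mv. legal n p mv" and e: "e < n"
  shows "edge_sign n p e * edge_sign n p (cyc_next n e) = -1 \<longleftrightarrow> p e = None"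
proof (cases "p e = None")
  case True
  then show ?thesis
    using no_legal_move_unmarked_between_opposite[OF n board free dead e True]
    by (auto simp: edge_sign_def)
next
  case marked: False
  show ?thesis
  proof (cases "p (cyc_next n e) = None")
    case True
    then show ?thesis
      using marked e by (simp add: edge_sign_def)
  next
    case False
    then show ?thesis
      using marked e sink_source_free_adjacent_clockwise[OF n board free e marked False]
      by (simp add: edge_sign_def)
  qed
qed

lemma no_legal_move_even_unmarked:
  assumes n: "2 \<le> n" and board: "arrows_on_board n p" and free: "sink_source_free n p"
    and dead: "\<nexists>mv. legal n p mv"
  shows "even (card {e. e < n \<and> p e = None})"
proof -
  have "{e. e < n \<and> edge_sign n p e * edge_sign n p (cyc_next n e) = -1} = {e. e < n \<and> p e = None}"
    using edge_sign_change_iff_unmarked[OF assms] by blast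
  moreover have "even (card {e. e < n \<and> edge_sign n p e * edge_sign n p (cyc_next n e) = -1})"
    by (rule even_card_sign_changes) (simp add: edge_sign_def)
  ultimately show ?thesis
    by simp
qed

lemma complete_play_even_unmarked:
  assumes n: "2 \<le> n" and complete: "complete_play n ms"
  shows "even (card {e. e < n \<and> run ms e = None})"
proof -
  have valid: "valid_play n ms"
    using complete by (simp add: complete_play_def)
  consider "cycle_cell n (run ms)" | "\<nexists>mv. legal n (run ms) mv"
    using complete by (auto simp: complete_play_def)
  then show ?thesis
  proof cases
    case 1
    then have "card {e. e < n \<and> run ms e = None} = 0"
      by (auto simp: cycle_cell_def)
    then show ?thesis
      by (metis even_zero)
  next
    case 2
    then show ?thesis
      using no_legal_move_even_unmarked n valid_play_arrows_on_board[OF valid]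
        valid_play_sink_source_free[OF valid] by blast
  qed
qed

lemma complete_play_nonempty:
  assumes n: "2 \<le> n" and complete: "complete_play n ms"
  shows "ms \<noteq> []"
proof
  assume "ms = []"
  then have run_empty: "run ms = empty_pos"
    by (simp add: run_def)
  have "legal n empty_pos (0, cyc_next n 0)"
    using n sink_source_free_empty_pos
    by (intro legal_forward) (auto simp: arrows_on_board_def empty_pos_def)
  moreover have "\<not> cycle_cell n empty_pos"
    using n by (auto simp: cycle_cell_def empty_pos_def intro!: exI[of _ 0])
  ultimately show False
    using complete by (auto simp: complete_play_def run_empty)
qed

theorem theorem4p3:
  fixes n :: nat and ms :: "move list"
  assumes "n \<ge> 3" and "complete_play n ms"
  shows "ms \<noteq> [] \<and> (odd n \<longrightarrow> winner n ms = 1) \<and> (even n \<longrightarrow> winner n ms = 2)"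
proof -
  have n: "2 \<le> n"
    using assms(1) by simp
  have nonempty: "ms \<noteq> []"
    using complete_play_nonempty[OF n assms(2)] .
  have "length ms + card {e. e < n \<and> run ms e = None} = n"
    using assms(2) by (intro valid_play_length_add_unmarked) (simp add: complete_play_def)
  moreover have "even (card {e. e < n \<and> run ms e = None})"
    using complete_play_even_unmarked[OF n assms(2)] .
  ultimately have "even (length ms) \<longleftrightarrow> even n"
    by (metis even_add)
  moreover have "winner n ms = mover (length ms - 1)"
    by (simp add: winner_def)
  ultimately show ?thesis
    using nonempty by (auto simp: mover_def)
qed

end
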